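(* Let $S$, $v$, $\hat S$ and $\mathrm{Lip}_a$ be as in the context. For every $f\in C^1(\mathbb R^2,\mathbb R)$, $$\mathrm{Lip}_a(f,x)\ge|P_{v(x)}\nabla f(x)|\qquad\text{for all }x\in\hat S.$$
   Context: Let $T_1=\begin{pmatrix}3/5&0\\0&1/5\end{pmatrix}$, $T_2=\begin{pmatrix}3/10&\sqrt3/10\\ \sqrt3/10&1/2\end{pmatrix}$, $T_3=\begin{pmatrix}3/10&-\sqrt3/10\\ -\sqrt3/10&1/2\end{pmatrix}$, $\bar A=(0,0)$, $\bar B=(1,1/\sqrt3)$, $\bar C=(1,-1/\sqrt3)$, $\psi_1(x)=\bar A+T_1(x-\bar A)$, $\psi_2(x)=\bar B+T_2(x-\bar B)$, $\psi_3(x)=\bar C+T_3(x-\bar C)$; the harmonic Sierpinski gasket $S$ is the unique nonempty compact set with $S=\bigcup_i\psi_i(S)$. Let $\Sigma=\{1,2,3\}^{\mathbb N}$, $\psi_{w_0\dots w_l}=\psi_{w_0}\circ\cdots\circ\psi_{w_l}$ (affine with constant derivative $D\psi_{w_0\dots w_l}$), and $\Phi:\Sigma\to S$, $\Phi(w)=$ the unique point of $\bigcap_l\psi_{w_0\dots w_l}(\triangle)$, $\triangle$ the closed triangle $\bar A\bar B\bar C$. Let $N=\{\psi_{w_0\dots w_l}(P): l\ge0,\ w\in\Sigma,\ P\in\{\bar A,\bar B,\bar C\}\}$ (countable; exactly the points with more than one coding). Kusuoka's measure: with $(\mathcal LA)(x)=\sum_i{}^tD\psi_iA_{\psi_i(x)}D\psi_i$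 on continuous symmetric-matrix fields, having simple positive eigenvalue $\beta$, let $\tau$ be the unique semipositive-definite symmetric-matrix-valued Borel measure on $S$ with $\mathrm{tr}\,\tau(S)=1$ and $\mathcal L^*\tau=\beta\tau$; $\tau(S)$ is a positive multiple of $Id$; $\kappa(E)=\mathrm{tr}\,\tau(E)$ is a non-atomic probability measure. For a unit vector $v$, $P_v$ is orthogonal projection onto $\mathbb Rv$; $\|A\|_{HS}^2=\mathrm{tr}({}^tAA)$. There is a Borel field of unit vectors $v$ with $\tau=P_{v(x)}\kappa$. Let $\tilde S$ be the set of $x=\Phi(w)$ at which $P_{v(x)}=\lim_{l\to\infty}D\psi_{w_0\dots w_{l-1}}{}^tD\psi_{w_0\dots w_{l-1}}/\|D\psi_{w_0\dots w_{l-1}}\|_{HS}^2$, and $\hat S=\tilde S\setminus N$ ($\kappa(\hat S)=1$). For $h:\mathbb R^2\to\mathbb R$ and $x\in S$, $\mathrm{Lip}_a(h,x)=\lim_{r\to0}\sup\{|h(y)-h(z)|/\|y-z\|: y\ne z,\ y,z\in S\cap B(x,r)\}$ (local Lipschitz constant computed on $S$). *)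

theory Defs
  imports "HOL-Analysis.Analysis"
begin

type_synonym pt = "real^2"
type_synonym mat2 = "real^2^2"

definition T1 :: mat2 where "T1 = vector [vector [3/5, 0], vector [0, 1/5]]"
definition T2 :: mat2 where
  "T2 = vector [vector [3/10, sqrt 3/10], vector [sqrt 3/10, 1/2]]"
definition T3 :: mat2 where
  "T3 = vector [vector [3/10, - sqrt 3/10], vector [- sqrt 3/10, 1/2]]"

definition pA :: pt where "pA = vector [0, 0]"
definition pB :: pt where "pB = vector [1, 1 / sqrt 3]"
definition pC :: pt where "pC = vector [1, - 1 / sqrt 3]"

definition Tm :: "nat \<Rightarrow> mat2" where
  "Tm i = (if i = 1 then T1 else if i = 2 then T2 else T3)"
definition fixpt :: "nat \<Rightarrow> pt" where
  "fixpt i = (if i = 1 then pA else if i = 2 then pB else pC)"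

definition psi :: "nat \<Rightarrow> pt \<Rightarrow> pt" where
  "psi i x = fixpt i + Tm i *v (x - fixpt i)"

definition HSG :: "pt set" where
  "HSG = (THE S. S \<noteq> {} \<and> compact S \<and> S = (\<Union>i\<in>{1,2,3::nat}. psi i ` S))"

definition Sigma3 :: "(nat \<Rightarrow> nat) set" where
  "Sigma3 = {w. \<forall>n. w n \<in> {1,2,3}}"

text \<open>psi_list [i0,...,il] = psi i0 o ... o psi il, with (constant) derivative
  Dpsi_list [i0,...,il] = T i0 ** ... ** T il.\<close>
fun psi_list :: "nat list \<Rightarrow> pt \<Rightarrow> pt" where
  "psi_list [] = id"
| "psi_list (i # is) = psi i \<circ> psi_list is"

fun Dpsi_list :: "nat list \<Rightarrow> mat2" where
  "Dpsi_list [] = mat 1"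
| "Dpsi_list (i # is) = Tm i ** Dpsi_list is"

definition triangle :: "pt set" where
  "triangle = convex hull {pA, pB, pC}"

definition Phi :: "(nat \<Rightarrow> nat) \<Rightarrow> pt" where
  "Phi w = (THE x. x \<in> (\<Inter>l. psi_list (map w [0..<Suc l]) ` triangle))"

definition Nset :: "pt set" where
  "Nset = {psi_list (map w [0..<Suc l]) P | l w P. w \<in> Sigma3 \<and> P \<in> {pA, pB, pC}}"

definition sym_mat :: "mat2 \<Rightarrow> bool" where
  "sym_mat M \<longleftrightarrow> transpose M = M"

definition psd_mat :: "mat2 \<Rightarrow> bool" where
  "psd_mat M \<longleftrightarrow> sym_mat M \<and> (\<forall>u. u \<bullet> (M *v u) \<ge> 0)"

definition sym_field :: "(pt \<Rightarrow> mat2) \<Rightarrow> bool" where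
  "sym_field A \<longleftrightarrow> continuous_on HSG A \<and> (\<forall>x\<in>HSG. sym_mat (A x))"

definition opL :: "(pt \<Rightarrow> mat2) \<Rightarrow> pt \<Rightarrow> mat2" where
  "opL A x = (\<Sum>i\<in>{1,2,3::nat}. transpose (Tm i) ** A (psi i x) ** Tm i)"

definition eigen_field :: "real \<Rightarrow> (pt \<Rightarrow> mat2) \<Rightarrow> bool" where
  "eigen_field b A \<longleftrightarrow> sym_field A \<and> (\<forall>x\<in>HSG. opL A x = b *\<^sub>R A x)"

definition simple_pos_eigenvalue :: "real \<Rightarrow> bool" where
  "simple_pos_eigenvalue b \<longleftrightarrow> b > 0 \<and>
     (\<exists>A. eigen_field b A \<and> (\<exists>x\<in>HSG. A x \<noteq> 0) \<and>
        (\<forall>B. eigen_field b B \<longrightarrow> (\<exists>c. \<forall>x\<in>HSG. B x = c *\<^sub>R A x)))"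

definition betaK :: real where
  "betaK = (THE b. simple_pos_eigenvalue b)"

definition borelS :: "pt set set" where
  "borelS = sets (restrict_space borel HSG)"

text \<open>Semipositive-definite symmetric-matrix-valued Borel measures on S
  (set functions on the Borel subsets of S, countably additive, zero elsewhere).\<close>
definition matrix_measure :: "(pt set \<Rightarrow> mat2) \<Rightarrow> bool" where
  "matrix_measure \<tau> \<longleftrightarrow>
     (\<forall>E\<in>borelS. psd_mat (\<tau> E)) \<and>
     (\<forall>E. E \<notin> borelS \<longrightarrow> \<tau> E = 0) \<and>
     (\<forall>F::nat \<Rightarrow> pt set. range F \<subseteq> borelS \<longrightarrow> disjoint_family F \<longrightarrow>
        (\<lambda>n. \<tau> (F n)) sums \<tau> (\<Union>n. F n))"

text \<open>The dual operator L* on matrix measures: for every continuous field A,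
  integral of tr(A d(L*tau)) = integral of tr((L A) d tau); unfolded this is
  (L* tau)(E) = sum_i T_i tau(psi_i^-1(E) \<inter> S) T_i^t.\<close>
definition opLdual :: "(pt set \<Rightarrow> mat2) \<Rightarrow> pt set \<Rightarrow> mat2" where
  "opLdual \<tau> E = (\<Sum>i\<in>{1,2,3::nat}. Tm i ** \<tau> (psi i -` E \<inter> HSG) ** transpose (Tm i))"

definition tauK :: "pt set \<Rightarrow> mat2" where
  "tauK = (THE \<tau>. matrix_measure \<tau> \<and> trace (\<tau> HSG) = 1 \<and>
                 (\<forall>E\<in>borelS. opLdual \<tau> E = betaK *\<^sub>R \<tau> E))"

definition kappaK :: "pt measure" where
  "kappaK = measure_of HSG borelS (\<lambda>E. ennreal (trace (tauK E)))"

definition projm :: "pt \<Rightarrow> mat2" where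
  "projm v = (\<chi> i j. v $ i * v $ j)"

definition HS_sq :: "mat2 \<Rightarrow> real" where
  "HS_sq A = trace (transpose A ** A)"

definition kusuoka_field :: "(pt \<Rightarrow> pt) \<Rightarrow> bool" where
  "kusuoka_field v \<longleftrightarrow> v \<in> borel_measurable (restrict_space borel HSG) \<and>
     (\<forall>x\<in>HSG. norm (v x) = 1) \<and>
     (\<forall>E\<in>borelS. tauK E = (\<chi> i j. set_lebesgue_integral kappaK E (\<lambda>x. projm (v x) $ i $ j)))"

definition S_tilde :: "(pt \<Rightarrow> pt) \<Rightarrow> pt set" where
  "S_tilde v = {x. \<exists>w\<in>Sigma3. x = Phi w \<and>
      (\<lambda>l. (1 / HS_sq (Dpsi_list (map w [0..<l]))) *\<^sub>R
            (Dpsi_list (map w [0..<l]) ** transpose (Dpsi_list (map w [0..<l]))))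
        \<longlonglongrightarrow> projm (v x)}"

definition S_hat :: "(pt \<Rightarrow> pt) \<Rightarrow> pt set" where
  "S_hat v = S_tilde v - Nset"

definition Lip_a :: "(pt \<Rightarrow> real) \<Rightarrow> pt \<Rightarrow> ereal" where
  "Lip_a h x = Lim (at_right (0::real)) (\<lambda>r.
     SUP (y, z) \<in> {(y, z). y \<noteq> z \<and> y \<in> HSG \<inter> ball x r \<and> z \<in> HSG \<inter> ball x r}.
        ereal (\<bar>h y - h z\<bar> / norm (y - z)))"

definition C1 :: "(pt \<Rightarrow> real) \<Rightarrow> bool" where
  "C1 f \<longleftrightarrow> (\<exists>f' :: pt \<Rightarrow> pt \<Rightarrow>\<^sub>L real.
     (\<forall>x. (f has_derivative blinfun_apply (f' x)) (at x)) \<and> continuous_on UNIV f')"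

definition grad :: "(pt \<Rightarrow> real) \<Rightarrow> pt \<Rightarrow> pt" where
  "grad f x = (\<chi> i. frechet_derivative f (at x) (axis i 1))"

end

theory Submission
  imports Defs
begin

(* Let x = Phi w lie in S_hat v. The cells psi_[w|l](triangle) shrink to x, and by the
   definition of S_tilde the normalized Gram matrices D D^t / |D|_HS^2 of their linear parts
   D = Dpsi_[w|l] converge to the projection onto v x. Hence the longer of the two edges of the
   cell issuing from the image of pA, suitably oriented, has a direction converging to v x;
   its endpoints are points of S converging to x. Along these pairs the difference quotients
   of a C^1 function f converge to |grad f x . v x| = |P_(v x) grad f x|, which is therefore a
   lower bound for Lip_a f x. *)

section \<open>Contraction of the similitudes\<close>

lemma norm_sq_vec2: "(norm (x::real^2))\<^sup>2 = (x$1)\<^sup>2 + (x$2)\<^sup>2"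
  by (simp add: norm_vec_def L2_set_def sum_2)

lemma inner_vec2: "(x::real^2) \<bullet> y = x$1 * y$1 + x$2 * y$2"
  by (simp add: inner_vec_def sum_2)

lemma matrix_vector_mult_vec2: "((A::real^2^2) *v u) $ i = A$i$1 * u$1 + A$i$2 * u$2"
  by (simp add: matrix_vector_mult_def sum_2)

lemma sqrt3_mult_cancel: "sqrt 3 * (sqrt 3 * x) = 3 * x"
  by (simp add: mult.assoc[symmetric])

lemma norm_T1_sq: "(norm (T1 *v u))\<^sup>2 = 9/25 * (norm u)\<^sup>2 - 8/25 * (u$2)\<^sup>2"
  unfolding norm_sq_vec2
  by (simp add: T1_def matrix_vector_mult_vec2 power2_eq_square algebra_simps)

lemma norm_T2_sq: "(norm (T2 *v u))\<^sup>2 = 9/25 * (norm u)\<^sup>2 - 2/25 * (sqrt 3 * u$1 - u$2)\<^sup>2"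
  unfolding norm_sq_vec2
  by (simp add: T2_def matrix_vector_mult_vec2 power2_eq_square algebra_simps sqrt3_mult_cancel)

lemma norm_T3_sq: "(norm (T3 *v u))\<^sup>2 = 9/25 * (norm u)\<^sup>2 - 2/25 * (sqrt 3 * u$1 + u$2)\<^sup>2"
  unfolding norm_sq_vec2
  by (simp add: T3_def matrix_vector_mult_vec2 power2_eq_square algebra_simps sqrt3_mult_cancel)

lemma norm_Tm_le: "norm (Tm i *v u) \<le> 3/5 * norm u"
proof (rule power2_le_imp_le)
  have "(norm (Tm i *v u))\<^sup>2 \<le> 9/25 * (norm u)\<^sup>2"
    using norm_T1_sq[of u] norm_T2_sq[of u] norm_T3_sq[of u] by (auto simp: Tm_def)
  then show "(norm (Tm i *v u))\<^sup>2 \<le> (3/5 * norm u)\<^sup>2"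
    by (simp add: power_mult_distrib power2_eq_square)
qed simp

lemma psi_diff: "psi i p - psi i q = Tm i *v (p - q)"
  by (simp add: psi_def matrix_vector_mult_diff_distrib)

lemma psi_list_diff: "psi_list ws p - psi_list ws q = Dpsi_list ws *v (p - q)"
  by (induction ws) (simp_all add: psi_diff matrix_vector_mul_assoc)

lemma psi_list_append: "psi_list (ws @ [j]) = psi_list ws \<circ> psi j"
  by (induction ws) auto

lemma norm_Dpsi_list_le: "norm (Dpsi_list ws *v u) \<le> (3/5) ^ length ws * norm u"
proof (induction ws)
  case (Cons i ws)
  have "norm (Dpsi_list (i # ws) *v u) = norm (Tm i *v (Dpsi_list ws *v u))"
    by (simp add: matrix_vector_mul_assoc)
  also have "\<dots> \<le> 3/5 * norm (Dpsi_list ws *v u)"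
    by (rule norm_Tm_le)
  also have "\<dots> \<le> 3/5 * ((3/5) ^ length ws * norm u)"
    using Cons.IH by simp
  finally show ?case
    by simp
qed simp

lemma dist_psi_list_le: "dist (psi_list ws p) (psi_list ws q) \<le> (3/5) ^ length ws * dist p q"
  using norm_Dpsi_list_le[of ws "p - q"] by (simp add: dist_norm psi_list_diff)

lemma continuous_on_psi: "continuous_on S (psi i)"
  unfolding psi_def matrix_vector_mult_diff_distrib by (intro continuous_intros)

lemma continuous_on_psi_list: "continuous_on S (psi_list ws)"
proof -
  have affine: "psi_list ws 0 + Dpsi_list ws *v x = psi_list ws x" for x
    using psi_list_diff[of ws x 0] by (simp add: algebra_simps)
  have "continuous_on S (\<lambda>x. psi_list ws 0 + Dpsi_list ws *v x)"
    by (intro continuous_intros)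
  then show ?thesis
    by (simp only: affine)
qed

(* Tm and fixpt treat every index other than 1 and 2 as 3, so codings need not be
   restricted to Sigma3. *)
lemma psi_cases: "psi i = psi 1 \<or> psi i = psi 2 \<or> psi i = psi 3"
  by (cases "i = 1 \<or> i = 2") (auto simp: fun_eq_iff psi_def Tm_def fixpt_def)

section \<open>Cells of a coding\<close>

lemma compact_triangle: "compact triangle"
  unfolding triangle_def by (simp add: finite_imp_compact_convex_hull)

lemma vertices_in_triangle: "{pA, pB, pC} \<subseteq> triangle"
  unfolding triangle_def by (rule hull_subset)

lemma psi_eq_affine: "psi i x = (fixpt i - Tm i *v fixpt i) + Tm i *v x"
  by (simp add: psi_def matrix_vector_mult_diff_distrib)

lemma psi_image_convex_hull: "psi i ` (convex hull S) = convex hull (psi i ` S)"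
proof -
  have psi_image: "psi i ` A = (\<lambda>x. (fixpt i - Tm i *v fixpt i) + x) ` ((*v) (Tm i) ` A)" for A
    by (simp add: image_image psi_eq_affine)
  show ?thesis
    unfolding psi_image by (simp add: convex_hull_linear_image convex_hull_translation)
qed

lemma psi_vertices_barycentric:
  "psi 1 pB = (2/5) *\<^sub>R pA + (2/5) *\<^sub>R pB + (1/5) *\<^sub>R pC"
  "psi 1 pC = (2/5) *\<^sub>R pA + (1/5) *\<^sub>R pB + (2/5) *\<^sub>R pC"
  "psi 2 pA = (2/5) *\<^sub>R pA + (2/5) *\<^sub>R pB + (1/5) *\<^sub>R pC"
  "psi 2 pC = (1/5) *\<^sub>R pA + (2/5) *\<^sub>R pB + (2/5) *\<^sub>R pC"
  "psi 3 pA = (2/5) *\<^sub>R pA + (1/5) *\<^sub>R pB + (2/5) *\<^sub>R pC"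
  "psi 3 pB = (1/5) *\<^sub>R pA + (2/5) *\<^sub>R pB + (2/5) *\<^sub>R pC"
  by (simp_all add: vec_eq_iff forall_2 psi_def fixpt_def Tm_def T1_def T2_def T3_def
      matrix_vector_mult_vec2 pA_def pB_def pC_def; simp add: field_simps)+

lemma psi_vertex_in_triangle:
  assumes "P \<in> {pA, pB, pC}"
  shows "psi i P \<in> triangle"
proof -
  have barycentric: "a *\<^sub>R pA + b *\<^sub>R pB + c *\<^sub>R pC \<in> triangle"
    if "0 \<le> a" "0 \<le> b" "0 \<le> c" "a + b + c = 1" for a b c
    using that unfolding triangle_def convex_hull_3 by blast
  have fixed: "psi 1 pA = pA" "psi 2 pB = pB" "psi 3 pC = pC"
    by (simp_all add: psi_def fixpt_def)
  consider "psi i = psi 1" | "psi i = psi 2" | "psi i = psi 3"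
    using psi_cases by blast
  then show ?thesis
    by cases (use assms vertices_in_triangle in
      \<open>auto simp: fixed psi_vertices_barycentric simp flip: One_nat_def intro!: barycentric\<close>)
qed

lemma psi_triangle_subset: "psi i ` triangle \<subseteq> triangle"
proof -
  have "psi i ` {pA, pB, pC} \<subseteq> triangle"
    using psi_vertex_in_triangle by blast
  then show ?thesis
    unfolding triangle_def psi_image_convex_hull
    by (rule convex_hull_subset[of _ "{pA, pB, pC}", unfolded hull_hull])
qed

lemma psi_list_triangle_subset: "psi_list ws ` triangle \<subseteq> triangle"
  by (induction ws) (use psi_triangle_subset in \<open>auto simp: image_comp[symmetric]\<close>)

definition cell :: "(nat \<Rightarrow> nat) \<Rightarrow> nat \<Rightarrow> pt set" where
  "cell w l = psi_list (map w [0..<l]) ` triangle"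

lemma cell_Suc_subset: "cell w (Suc l) \<subseteq> cell w l"
proof -
  have "cell w (Suc l) = psi_list (map w [0..<l]) ` psi (w l) ` triangle"
    by (simp add: cell_def psi_list_append image_comp)
  then show ?thesis
    unfolding cell_def using psi_triangle_subset by blast
qed

lemma three_fifths_power_tendsto_0: "(\<lambda>l. (3/5::real) ^ l * c) \<longlonglongrightarrow> 0"
  by (intro tendsto_mult_left_zero LIMSEQ_power_zero) simp

lemma tendsto_of_dist_le_three_fifths_power:
  assumes "\<And>l. dist (f l) x \<le> (3/5) ^ l * c"
  shows "f \<longlonglongrightarrow> x"
proof -
  have "\<forall>\<^sub>F l in sequentially. norm (dist (f l) x) \<le> (3/5) ^ l * c"
    using assms by simp
  from Lim_null_comparison[OF this three_fifths_power_tendsto_0] show ?thesis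
    by (rule tendsto_dist_iff[THEN iffD2])
qed

lemma dist_in_cell_le:
  assumes "p \<in> cell w l" and "q \<in> cell w l"
  shows "dist p q \<le> (3/5) ^ l * diameter triangle"
proof -
  obtain p' q' where p'q': "p' \<in> triangle" "q' \<in> triangle"
    and "p = psi_list (map w [0..<l]) p'" "q = psi_list (map w [0..<l]) q'"
    using assms unfolding cell_def by blast
  then have "dist p q \<le> (3/5) ^ l * dist p' q'"
    using dist_psi_list_le[of "map w [0..<l]" p' q'] by simp
  also have "\<dots> \<le> (3/5) ^ l * diameter triangle"
    using diameter_bounded_bound[OF compact_imp_bounded[OF compact_triangle] p'q'] by simp
  finally show ?thesis .
qed

lemma Phi_in_cell: "Phi w \<in> cell w l"
proof -
  define S where "S n = cell w (Suc n)" for n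
  have "\<exists>a. \<Inter>(range S) = {a}"
  proof (rule decreasing_closed_nest_sing)
    show "closed (S n)" for n
      unfolding S_def cell_def
      by (intro compact_imp_closed compact_continuous_image continuous_on_psi_list compact_triangle)
    show "S n \<noteq> {}" for n
      unfolding S_def cell_def using vertices_in_triangle by blast
    show "S n \<subseteq> S m" if "m \<le> n" for m n
      using decseqD[OF decseq_SucI[of S] that] cell_Suc_subset unfolding S_def by blast
    show "\<exists>n. \<forall>x\<in>S n. \<forall>y\<in>S n. dist x y < e" if "e > 0" for e
    proof -
      obtain n where n: "\<forall>l\<ge>n. (3/5) ^ l * diameter triangle < e"
        using order_tendstoD(2)[OF three_fifths_power_tendsto_0 \<open>e > 0\<close>]
        unfolding eventually_sequentially by blast
      have "dist x y < e" if "x \<in> S n" "y \<in> S n" for x y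
      proof -
        have "(3/5) ^ Suc n * diameter triangle < e"
          using spec[OF n, of "Suc n"] by simp
        then show ?thesis
          using dist_in_cell_le[OF that[unfolded S_def]] by linarith
      qed
      then show ?thesis
        by blast
    qed
  qed
  then obtain a where a: "\<Inter>(range S) = {a}"
    by blast
  then have "Phi w = a"
    unfolding Phi_def S_def cell_def by simp
  then have "Phi w \<in> S l"
    using a by blast
  then show ?thesis
    unfolding S_def using cell_Suc_subset by blast
qed

lemma psi_list_cell_vertex_tendsto_Phi:
  assumes "\<And>l. P l \<in> triangle"
  shows "(\<lambda>l. psi_list (map w [0..<l]) (P l)) \<longlonglongrightarrow> Phi w"
proof (rule tendsto_of_dist_le_three_fifths_power)
  fix l
  have "psi_list (map w [0..<l]) (P l) \<in> cell w l"
    unfolding cell_def by (rule imageI[OF assms])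
  then show "dist (psi_list (map w [0..<l]) (P l)) (Phi w) \<le> (3/5) ^ l * diameter triangle"
    using dist_in_cell_le[OF _ Phi_in_cell] by simp
qed

section \<open>The gasket as the closure of the vertex orbit\<close>

definition is_attractor :: "pt set \<Rightarrow> bool" where
  "is_attractor S \<longleftrightarrow> S \<noteq> {} \<and> compact S \<and> S = (\<Union>i\<in>{1,2,3::nat}. psi i ` S)"

lemma psi_image_subset_UN: "psi i ` A \<subseteq> (\<Union>j\<in>{1,2,3::nat}. psi j ` A)"
proof -
  consider "psi i = psi 1" | "psi i = psi 2" | "psi i = psi 3"
    using psi_cases by blast
  then show ?thesis
    by cases (auto intro: UN_upper)
qed

lemma attractorD:
  assumes "is_attractor S"
  shows "S \<noteq> {}" and "compact S" and "S = (\<Union>i\<in>{1,2,3::nat}. psi i ` S)"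
  using assms unfolding is_attractor_def by blast+

lemma attractor_psi_image_subset:
  assumes "is_attractor S"
  shows "psi i ` S \<subseteq> S"
  using psi_image_subset_UN[of i S] attractorD(3)[OF assms] by argo

lemma attractor_psi_list_image_subset: "is_attractor S \<Longrightarrow> psi_list ws ` S \<subseteq> S"
  by (induction ws) (use attractor_psi_image_subset in \<open>fastforce+\<close>)

lemma attractor_psi_list_cover:
  assumes "is_attractor S" and "x \<in> S"
  shows "\<exists>ws y. length ws = n \<and> y \<in> S \<and> x = psi_list ws y"
proof (induction n)
  case 0
  show ?case
    using assms(2) by (intro exI[of _ "[]"]) auto
next
  case (Suc n)
  then obtain ws y where ws: "length ws = n" "y \<in> S" "x = psi_list ws y"
    by blast
  have "y \<in> (\<Union>i\<in>{1,2,3::nat}. psi i ` S)"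
    using ws(2) attractorD(3)[OF assms(1)] by argo
  then obtain i y' where "y' \<in> S" "y = psi i y'"
    by blast
  with ws show ?case
    by (intro exI[of _ "ws @ [i]"] exI[of _ y']) (simp add: psi_list_append)
qed

lemma attractor_subset:
  assumes S: "is_attractor S" and S': "is_attractor S'"
  shows "S \<subseteq> S'"
proof
  fix x assume "x \<in> S"
  obtain z where z: "z \<in> S'"
    using attractorD(1)[OF S'] by blast
  obtain ws y where cover: "\<And>n. length (ws n) = n \<and> y n \<in> S \<and> x = psi_list (ws n) (y n)"
    using attractor_psi_list_cover[OF S \<open>x \<in> S\<close>] by metis
  have bounded: "bounded (S \<union> S')"
    using attractorD(2)[OF S] attractorD(2)[OF S'] by (simp add: compact_imp_bounded)
  have "psi_list (ws n) z \<in> S'" for n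
    using attractor_psi_list_image_subset[OF S'] z by blast
  moreover have "(\<lambda>n. psi_list (ws n) z) \<longlonglongrightarrow> x"
  proof (rule tendsto_of_dist_le_three_fifths_power)
    fix n
    have "dist (psi_list (ws n) z) x \<le> (3/5) ^ n * dist z (y n)"
      using dist_psi_list_le[of "ws n" z "y n"] cover[of n] by simp
    also have "\<dots> \<le> (3/5) ^ n * diameter (S \<union> S')"
      using diameter_bounded_bound[OF bounded, of z "y n"] z cover[of n] by simp
    finally show "dist (psi_list (ws n) z) x \<le> (3/5) ^ n * diameter (S \<union> S')" .
  qed
  ultimately show "x \<in> S'"
    by (rule closed_sequentially[OF compact_imp_closed[OF attractorD(2)[OF S']]])
qed

definition vertex_orbit :: "pt set" where
  "vertex_orbit = {psi_list ws P | ws P. P \<in> {pA, pB, pC}}"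

lemma psi_list_vertex_in_vertex_orbit: "P \<in> {pA, pB, pC} \<Longrightarrow> psi_list ws P \<in> vertex_orbit"
  unfolding vertex_orbit_def by blast

lemma psi_image_vertex_orbit_subset: "psi i ` vertex_orbit \<subseteq> vertex_orbit"
proof clarify
  fix x assume "x \<in> vertex_orbit"
  then obtain ws P where "P \<in> {pA, pB, pC}" "x = psi_list ws P"
    unfolding vertex_orbit_def by blast
  then show "psi i x \<in> vertex_orbit"
    using psi_list_vertex_in_vertex_orbit[of P "i # ws"] by simp
qed

lemma vertex_orbit_self_similar: "vertex_orbit = (\<Union>i\<in>{1,2,3::nat}. psi i ` vertex_orbit)"
proof
  show "(\<Union>i\<in>{1,2,3::nat}. psi i ` vertex_orbit) \<subseteq> vertex_orbit"
    using psi_image_vertex_orbit_subset by blast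
next
  show "vertex_orbit \<subseteq> (\<Union>i\<in>{1,2,3::nat}. psi i ` vertex_orbit)"
  proof
    fix x assume "x \<in> vertex_orbit"
    then obtain ws P where P: "P \<in> {pA, pB, pC}" and x: "x = psi_list ws P"
      unfolding vertex_orbit_def by blast
    have "\<exists>i y. y \<in> vertex_orbit \<and> x = psi i y"
    proof (cases ws)
      case Nil
      have "P \<in> vertex_orbit"
        using psi_list_vertex_in_vertex_orbit[OF P, of "[]"] by simp
      moreover have "P = psi 1 P \<or> P = psi 2 P \<or> P = psi 3 P"
        using P by (auto simp: psi_def fixpt_def)
      ultimately show ?thesis
        using Nil x by auto
    next
      case (Cons i ws')
      then show ?thesis
        using x psi_list_vertex_in_vertex_orbit[OF P, of ws'] by auto
    qed
    then show "x \<in> (\<Union>i\<in>{1,2,3::nat}. psi i ` vertex_orbit)"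
      using psi_image_subset_UN by blast
  qed
qed

lemma attractor_closure_vertex_orbit: "is_attractor (closure vertex_orbit)"
proof -
  have "vertex_orbit \<subseteq> triangle"
    using psi_list_triangle_subset vertices_in_triangle unfolding vertex_orbit_def by blast
  then have "bounded vertex_orbit"
    by (rule bounded_subset[OF compact_imp_bounded[OF compact_triangle]])
  then have compact: "compact (closure vertex_orbit)"
    by (simp add: compact_closure)
  have "pA \<in> vertex_orbit"
    using psi_list_vertex_in_vertex_orbit[of pA "[]"] by simp
  then have nonempty: "closure vertex_orbit \<noteq> {}"
    using closure_subset by blast
  have "psi i ` closure vertex_orbit \<subseteq> closure vertex_orbit" for i
    using psi_image_vertex_orbit_subset closure_subset
    by (intro image_closure_subset[OF continuous_on_psi closed_closure]) blast
  then have sub: "(\<Union>i\<in>{1,2,3::nat}. psi i ` closure vertex_orbit) \<subseteq> closure vertex_orbit"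
    by (rule UN_least)
  have sup: "closure vertex_orbit \<subseteq> (\<Union>i\<in>{1,2,3::nat}. psi i ` closure vertex_orbit)"
  proof (rule closure_minimal)
    have "vertex_orbit = (\<Union>i\<in>{1,2,3::nat}. psi i ` vertex_orbit)"
      by (rule vertex_orbit_self_similar)
    also have "\<dots> \<subseteq> (\<Union>i\<in>{1,2,3::nat}. psi i ` closure vertex_orbit)"
      by (intro UN_mono image_mono closure_subset order_refl)
    finally show "vertex_orbit \<subseteq> (\<Union>i\<in>{1,2,3::nat}. psi i ` closure vertex_orbit)" .
    show "closed (\<Union>i\<in>{1,2,3::nat}. psi i ` closure vertex_orbit)"
      by (intro closed_UN finite.intros ballI compact_imp_closed compact_continuous_image
          continuous_on_psi compact)
  qed
  show ?thesis
    unfolding is_attractor_def by (intro conjI compact nonempty subset_antisym[OF sup sub])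
qed

lemma HSG_eq_closure_vertex_orbit: "HSG = closure vertex_orbit"
  unfolding HSG_def is_attractor_def[symmetric]
proof (rule the_equality)
  show "is_attractor (closure vertex_orbit)"
    by (rule attractor_closure_vertex_orbit)
  show "S = closure vertex_orbit" if "is_attractor S" for S
    using attractor_subset[OF that attractor_closure_vertex_orbit]
      attractor_subset[OF attractor_closure_vertex_orbit that] by (rule subset_antisym)
qed

lemma closed_HSG: "closed HSG"
  by (simp add: HSG_eq_closure_vertex_orbit)

lemma psi_list_vertex_in_HSG: "P \<in> {pA, pB, pC} \<Longrightarrow> psi_list ws P \<in> HSG"
  unfolding HSG_eq_closure_vertex_orbit
  using psi_list_vertex_in_vertex_orbit closure_subset by blast

lemma Phi_in_HSG: "Phi w \<in> HSG"
proof (rule closed_sequentially[OF closed_HSG])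
  show "psi_list (map w [0..<l]) pA \<in> HSG" for l
    by (simp add: psi_list_vertex_in_HSG)
  show "(\<lambda>l. psi_list (map w [0..<l]) pA) \<longlonglongrightarrow> Phi w"
    using psi_list_cell_vertex_tendsto_Phi[of "\<lambda>_. pA" w] vertices_in_triangle by simp
qed

section \<open>Cell edges aligned with the Kusuoka direction\<close>

definition perp :: "pt \<Rightarrow> pt" where
  "perp v = vector [- v$2, v$1]"

lemma perp_nth [simp]: "perp v $ 1 = - v$2" "perp v $ 2 = v$1"
  by (simp_all add: perp_def)

lemma inner_perp_self: "v \<bullet> perp v = 0"
  by (simp add: inner_vec2)

lemma inner_sq_add_perp_inner_sq:
  assumes "norm v = 1"
  shows "(v \<bullet> y)\<^sup>2 + (perp v \<bullet> y)\<^sup>2 = (norm y)\<^sup>2"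
proof -
  have "(v \<bullet> y)\<^sup>2 + (perp v \<bullet> y)\<^sup>2 = (norm v)\<^sup>2 * (norm y)\<^sup>2"
    unfolding norm_sq_vec2 inner_vec2 by (simp add: power2_eq_square algebra_simps)
  then show ?thesis
    using assms by simp
qed

lemma norm_diff_sq_le_perp_inner_sq:
  assumes u: "norm u = 1" and v: "norm v = 1" and nonneg: "0 \<le> v \<bullet> u"
  shows "(norm (u - v))\<^sup>2 \<le> 2 * (perp v \<bullet> u)\<^sup>2"
proof -
  define a where "a = v \<bullet> u"
  have "(norm (u - v))\<^sup>2 = 2 - 2 * a"
    using u v unfolding a_def
    by (simp add: norm_eq_1 power2_norm_eq_inner inner_diff inner_commute)
  moreover have "a\<^sup>2 + (perp v \<bullet> u)\<^sup>2 = 1"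
    using inner_sq_add_perp_inner_sq[OF v, of u] u unfolding a_def by simp
  moreover have "0 \<le> a * (1 - a)"
  proof -
    have "a\<^sup>2 \<le> 1"
      using \<open>a\<^sup>2 + (perp v \<bullet> u)\<^sup>2 = 1\<close> by (metis le_add_same_cancel1 zero_le_power2)
    then have "a \<le> 1"
      by (simp add: power_le_one_iff abs_square_le_1)
    then show ?thesis
      using nonneg unfolding a_def by simp
  qed
  ultimately show ?thesis
    by (simp add: power2_eq_square algebra_simps)
qed

lemma inner_matrix_vector_mult_transpose: "w \<bullet> (A *v e) = (transpose A *v w) \<bullet> (e :: real^'n)"
  by (metis dot_lmul_matrix transpose_transpose vector_transpose_matrix)

lemma HS_sq_vec2: "HS_sq D = (D$1$1)\<^sup>2 + (D$1$2)\<^sup>2 + (D$2$1)\<^sup>2 + (D$2$2)\<^sup>2"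
  by (simp add: HS_sq_def trace_def transpose_def matrix_matrix_mult_def sum_2 power2_eq_square)

lemma norm_triangle_edges_sq: "(norm (pB - pA))\<^sup>2 = 4/3" "(norm (pC - pA))\<^sup>2 = 4/3"
  by (simp_all add: norm_sq_vec2 pA_def pB_def pC_def power_divide)

lemma long_triangle_edge: "\<exists>E\<in>{pB, pC}. HS_sq D \<le> 3 * (norm (D *v (E - pA)))\<^sup>2"
proof -
  have "(norm (D *v (pB - pA)))\<^sup>2 + (norm (D *v (pC - pA)))\<^sup>2
      = 2 * (D$1$1)\<^sup>2 + 2 * (D$2$1)\<^sup>2 + 2/3 * (D$1$2)\<^sup>2 + 2/3 * (D$2$2)\<^sup>2"
    unfolding norm_sq_vec2
    by (simp add: matrix_vector_mult_vec2 pA_def pB_def pC_def power2_eq_square field_simps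
        sqrt3_mult_cancel)
  then have "HS_sq D \<le> 3/2 * (norm (D *v (pB - pA)))\<^sup>2 + 3/2 * (norm (D *v (pC - pA)))\<^sup>2"
    unfolding HS_sq_vec2 using zero_le_power2[of "D$1$1"] zero_le_power2[of "D$2$1"] by linarith
  then show ?thesis
    by auto
qed

lemma oriented_long_triangle_edge:
  "\<exists>P\<in>{pA, pB, pC}. \<exists>Q\<in>{pA, pB, pC}. HS_sq D \<le> 3 * (norm (D *v (P - Q)))\<^sup>2 \<and>
     (norm (P - Q))\<^sup>2 = 4/3 \<and> 0 \<le> v \<bullet> (D *v (P - Q))"
proof -
  obtain E where E: "E \<in> {pB, pC}" "HS_sq D \<le> 3 * (norm (D *v (E - pA)))\<^sup>2"
    using long_triangle_edge by blast
  have edge: "(norm (E - pA))\<^sup>2 = 4/3" "(norm (pA - E))\<^sup>2 = 4/3"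
    using E(1) norm_triangle_edges_sq by (auto simp: norm_minus_commute)
  have flip: "D *v (pA - E) = - (D *v (E - pA))"
    by (simp add: matrix_vector_mult_diff_distrib)
  show ?thesis
  proof (cases "0 \<le> v \<bullet> (D *v (E - pA))")
    case True
    then show ?thesis
      using E edge by blast
  next
    case False
    then show ?thesis
      using E edge flip by (intro bexI[of _ pA] bexI[of _ E]) auto
  qed
qed

definition normalized_gram :: "mat2 \<Rightarrow> mat2" where
  "normalized_gram D = (1 / HS_sq D) *\<^sub>R (D ** transpose D)"

lemma norm_transpose_mult_sq:
  "(norm (transpose D *v w))\<^sup>2 = HS_sq D * (w \<bullet> (normalized_gram D *v w))" if "HS_sq D \<noteq> 0"
proof -
  have "(norm (transpose D *v w))\<^sup>2 = (transpose D *v w) \<bullet> (transpose D *v w)"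
    by (rule power2_norm_eq_inner)
  also have "\<dots> = w \<bullet> (D *v (transpose D *v w))"
    by (rule inner_matrix_vector_mult_transpose[symmetric])
  also have "\<dots> = w \<bullet> ((D ** transpose D) *v w)"
    by (simp only: matrix_vector_mul_assoc)
  moreover have "normalized_gram D *v w = (1 / HS_sq D) *\<^sub>R ((D ** transpose D) *v w)"
    by (simp add: normalized_gram_def scaleR_matrix_vector_assoc)
  ultimately show ?thesis
    using that by simp
qed

lemma edge_direction_perp_estimate:
  assumes pos: "0 < HS_sq D" and long: "HS_sq D \<le> 3 * (norm (D *v e))\<^sup>2"
    and edge: "(norm e)\<^sup>2 = 4/3"
  shows "(w \<bullet> sgn (D *v e))\<^sup>2 \<le> 4 * (w \<bullet> (normalized_gram D *v w))"
proof -
  define h where "h = HS_sq D"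
  define q where "q = w \<bullet> (normalized_gram D *v w)"
  have y: "0 < (norm (D *v e))\<^sup>2"
    using pos long unfolding h_def by linarith
  have "(w \<bullet> (D *v e))\<^sup>2 \<le> (norm (transpose D *v w))\<^sup>2 * (norm e)\<^sup>2"
    using Cauchy_Schwarz_ineq[of "transpose D *v w" e]
    by (simp add: inner_matrix_vector_mult_transpose power2_norm_eq_inner)
  also have "\<dots> = 4/3 * h * q"
    using norm_transpose_mult_sq[of D w] pos edge unfolding h_def q_def by simp
  finally have num: "(w \<bullet> (D *v e))\<^sup>2 \<le> 4/3 * h * q" .
  have "0 \<le> h * q"
    using norm_transpose_mult_sq[of D w] pos unfolding h_def q_def by (metis zero_le_power2 less_irrefl)
  then have "0 \<le> q"
    using pos unfolding h_def by (simp add: zero_le_mult_iff)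
  have "(w \<bullet> sgn (D *v e))\<^sup>2 = (w \<bullet> (D *v e))\<^sup>2 / (norm (D *v e))\<^sup>2"
    by (simp add: sgn_div_norm power_mult_distrib power_inverse field_simps)
  also have "\<dots> \<le> (4/3 * h * q) / (h / 3)"
    using num y long \<open>0 \<le> q\<close> pos unfolding h_def
    by (intro frac_le) auto
  also have "\<dots> = 4 * q"
    using pos unfolding h_def by simp
  finally show ?thesis
    unfolding q_def .
qed

lemma sgn_edge_image_close_to_direction:
  assumes v: "norm v = 1" and pos: "0 < HS_sq D" and long: "HS_sq D \<le> 3 * (norm (D *v e))\<^sup>2"
    and edge: "(norm e)\<^sup>2 = 4/3" and nonneg: "0 \<le> v \<bullet> (D *v e)"
  shows "D *v e \<noteq> 0"
    and "norm (sgn (D *v e) - v) \<le> sqrt (8 * (perp v \<bullet> (normalized_gram D *v perp v)))"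
proof -
  show nonzero: "D *v e \<noteq> 0"
    using pos long by auto
  then have unit: "norm (sgn (D *v e)) = 1"
    by (simp add: norm_sgn)
  have "0 \<le> v \<bullet> sgn (D *v e)"
    using nonneg by (simp add: sgn_div_norm)
  then have "(norm (sgn (D *v e) - v))\<^sup>2 \<le> 2 * (perp v \<bullet> sgn (D *v e))\<^sup>2"
    by (rule norm_diff_sq_le_perp_inner_sq[OF unit v])
  also have "\<dots> \<le> 8 * (perp v \<bullet> (normalized_gram D *v perp v))"
    using edge_direction_perp_estimate[OF pos long edge, of "perp v"] by simp
  finally show "norm (sgn (D *v e) - v) \<le> sqrt (8 * (perp v \<bullet> (normalized_gram D *v perp v)))"
    by (rule real_le_rsqrt)
qed

lemma quadratic_form_tendsto:
  fixes A :: "'a \<Rightarrow> mat2"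
  assumes "(A \<longlongrightarrow> B) F"
  shows "((\<lambda>l. w \<bullet> (A l *v w)) \<longlongrightarrow> w \<bullet> (B *v w)) F"
  unfolding inner_vec2 matrix_vector_mult_vec2
  by (intro tendsto_intros tendsto_vec_nth assms)

lemma trace_tendsto:
  fixes A :: "'a \<Rightarrow> mat2"
  assumes "(A \<longlongrightarrow> B) F"
  shows "((\<lambda>l. trace (A l)) \<longlongrightarrow> trace B) F"
  unfolding trace_def by (intro tendsto_intros tendsto_vec_nth assms)

lemma projm_mult: "projm v *v g = (v \<bullet> g) *\<^sub>R v"
  by (simp add: vec_eq_iff forall_2 matrix_vector_mult_vec2 projm_def inner_vec2 algebra_simps)

lemma eventually_HS_sq_pos:
  assumes v: "norm v = 1" and gram: "(\<lambda>l. normalized_gram (D l)) \<longlonglongrightarrow> projm v"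
  shows "\<forall>\<^sub>F l in sequentially. 0 < HS_sq (D l)"
proof -
  have "trace (projm v) = (norm v)\<^sup>2"
    unfolding norm_sq_vec2 by (simp add: trace_def projm_def sum_2 power2_eq_square)
  then have "(\<lambda>l. trace (normalized_gram (D l))) \<longlonglongrightarrow> 1"
    using trace_tendsto[OF gram] v by simp
  then have "\<forall>\<^sub>F l in sequentially. trace (normalized_gram (D l)) \<noteq> 0"
    by (rule tendsto_imp_eventually_ne) simp
  moreover have "trace (normalized_gram D') = 0" if "HS_sq D' = 0" for D'
    using that by (simp add: normalized_gram_def trace_def)
  moreover have "0 \<le> HS_sq D'" for D'
    by (simp add: HS_sq_vec2)
  ultimately show ?thesis
    by (elim eventually_mono) (metis order_less_le)
qed

lemma aligned_triangle_edges:
  assumes v: "norm v = 1" and gram: "(\<lambda>l. normalized_gram (D l)) \<longlonglongrightarrow> projm v"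
  obtains P Q where "\<And>l. P l \<in> {pA, pB, pC}" and "\<And>l. Q l \<in> {pA, pB, pC}"
    and "\<forall>\<^sub>F l in sequentially. D l *v (P l - Q l) \<noteq> 0"
    and "(\<lambda>l. sgn (D l *v (P l - Q l))) \<longlonglongrightarrow> v"
proof -
  have "\<forall>l. \<exists>P Q. P \<in> {pA, pB, pC} \<and> Q \<in> {pA, pB, pC} \<and>
      HS_sq (D l) \<le> 3 * (norm (D l *v (P - Q)))\<^sup>2 \<and> (norm (P - Q))\<^sup>2 = 4/3 \<and>
      0 \<le> v \<bullet> (D l *v (P - Q))"
    using oriented_long_triangle_edge by blast
  then obtain P Q where PQ: "\<And>l. P l \<in> {pA, pB, pC} \<and> Q l \<in> {pA, pB, pC} \<and>
      HS_sq (D l) \<le> 3 * (norm (D l *v (P l - Q l)))\<^sup>2 \<and> (norm (P l - Q l))\<^sup>2 = 4/3 \<and>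
      0 \<le> v \<bullet> (D l *v (P l - Q l))"
    by metis
  define q where "q l = perp v \<bullet> (normalized_gram (D l) *v perp v)" for l
  have close: "\<forall>\<^sub>F l in sequentially. D l *v (P l - Q l) \<noteq> 0 \<and>
      norm (sgn (D l *v (P l - Q l)) - v) \<le> sqrt (8 * q l)"
    using eventually_HS_sq_pos[OF v gram]
    by eventually_elim (use sgn_edge_image_close_to_direction[OF v] PQ in \<open>auto simp: q_def\<close>)
  have "q \<longlonglongrightarrow> 0"
    using quadratic_form_tendsto[OF gram, of "perp v"]
    by (simp add: q_def[abs_def] projm_mult inner_commute inner_perp_self)
  then have sqrt_lim: "(\<lambda>l. sqrt (8 * q l)) \<longlonglongrightarrow> 0"
    using tendsto_real_sqrt[OF tendsto_mult_left[of q 0 sequentially 8]] by simp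
  have "\<forall>\<^sub>F l in sequentially. norm (sgn (D l *v (P l - Q l)) - v) \<le> sqrt (8 * q l)"
    using close by (rule eventually_mono) simp
  from Lim_null_comparison[OF this sqrt_lim]
  have "(\<lambda>l. sgn (D l *v (P l - Q l)) - v) \<longlonglongrightarrow> 0" .
  then have "(\<lambda>l. sgn (D l *v (P l - Q l))) \<longlonglongrightarrow> v"
    by (rule LIM_zero_cancel)
  moreover have "\<forall>\<^sub>F l in sequentially. D l *v (P l - Q l) \<noteq> 0"
    using close by (rule eventually_mono) simp
  ultimately show ?thesis
    using PQ that by blast
qed

lemma aligned_cell_vertex_pairs:
  assumes u: "norm u = 1"
    and gram: "(\<lambda>l. normalized_gram (Dpsi_list (map w [0..<l]))) \<longlonglongrightarrow> projm u"
  obtains y z where "\<And>l. y l \<in> HSG" and "y \<longlonglongrightarrow> Phi w"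
    and "\<And>l. z l \<in> HSG" and "z \<longlonglongrightarrow> Phi w"
    and "\<forall>\<^sub>F l in sequentially. y l \<noteq> z l" and "(\<lambda>l. sgn (y l - z l)) \<longlonglongrightarrow> u"
proof -
  obtain P Q where P: "\<And>l. P l \<in> {pA, pB, pC}" and Q: "\<And>l. Q l \<in> {pA, pB, pC}"
    and nonzero: "\<forall>\<^sub>F l in sequentially. Dpsi_list (map w [0..<l]) *v (P l - Q l) \<noteq> 0"
    and direction: "(\<lambda>l. sgn (Dpsi_list (map w [0..<l]) *v (P l - Q l))) \<longlonglongrightarrow> u"
    using aligned_triangle_edges[OF u gram] by blast
  define y where "y l = psi_list (map w [0..<l]) (P l)" for l
  define z where "z l = psi_list (map w [0..<l]) (Q l)" for l
  have yz: "y l - z l = Dpsi_list (map w [0..<l]) *v (P l - Q l)" for l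
    unfolding y_def z_def by (rule psi_list_diff)
  have "P l \<in> triangle" "Q l \<in> triangle" for l
    using P Q vertices_in_triangle by blast+
  then have "y \<longlonglongrightarrow> Phi w" "z \<longlonglongrightarrow> Phi w"
    unfolding y_def z_def by (simp_all add: psi_list_cell_vertex_tendsto_Phi)
  moreover have "y l \<in> HSG" "z l \<in> HSG" for l
    unfolding y_def z_def using P Q by (simp_all add: psi_list_vertex_in_HSG)
  moreover have "\<forall>\<^sub>F l in sequentially. y l \<noteq> z l"
    using nonzero by (rule eventually_mono) (simp add: yz[symmetric])
  moreover have "(\<lambda>l. sgn (y l - z l)) \<longlonglongrightarrow> u"
    using direction by (simp add: yz)
  ultimately show ?thesis
    using that by blast
qed

section \<open>Difference quotients and the local Lipschitz constant\<close>

lemma has_derivative_eq_grad_inner: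
  assumes "(f has_derivative f') (at x)"
  shows "f' u = grad f x \<bullet> u"
proof -
  have f': "f' = frechet_derivative f (at x)" and lin: "linear f'"
    using frechet_derivative_at[OF assms] has_derivative_linear[OF assms] by simp_all
  have "u = u$1 *\<^sub>R axis 1 1 + u$2 *\<^sub>R axis 2 1"
    by (simp add: vec_eq_iff forall_2 axis_def)
  then have "f' u = f' (u$1 *\<^sub>R axis 1 1 + u$2 *\<^sub>R axis 2 1)"
    by (rule arg_cong)
  also have "\<dots> = u$1 * f' (axis 1 1) + u$2 * f' (axis 2 1)"
    by (simp add: linear_add[OF lin] linear_scale[OF lin])
  finally have "f' u = u$1 * f' (axis 1 1) + u$2 * f' (axis 2 1)" .
  then show ?thesis
    by (simp add: grad_def f'[symmetric] inner_vec2 mult.commute)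
qed

lemma continuous_derivative_strict_linearization:
  fixes f :: "'a::real_normed_vector \<Rightarrow> 'b::real_normed_vector"
  assumes der: "\<And>p. (f has_derivative blinfun_apply (F p)) (at p)" and cont: "isCont F x"
    and "0 < e"
  shows "\<exists>d>0. \<forall>y\<in>ball x d. \<forall>z\<in>ball x d. norm (f y - f z - F x (y - z)) \<le> e * norm (y - z)"
proof -
  obtain d where "0 < d" and d: "\<And>p. dist p x < d \<Longrightarrow> dist (F p) (F x) < e"
    using cont \<open>0 < e\<close> unfolding continuous_at_eps_delta by blast
  have "norm (f y - f z - F x (y - z)) \<le> e * norm (y - z)" if yz: "y \<in> ball x d" "z \<in> ball x d" for y z
  proof -
    have "norm (f y - f z - F x (y - z)) \<le> norm (y - z) * e"
    proof (rule differentiable_bound_linearization[where S = "ball x d" and f' = "\<lambda>p. blinfun_apply (F p)"])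
      show "z + t *\<^sub>R (y - z) \<in> ball x d" if "t \<in> {0..1}" for t
        using convexD_alt[OF convex_ball yz(2,1), of t] that by (simp add: algebra_simps)
      show "(f has_derivative blinfun_apply (F p)) (at p within ball x d)" for p
        using der by (rule has_derivative_at_withinI)
      show "onorm (blinfun_apply (F p) - blinfun_apply (F x)) \<le> e" if "p \<in> ball x d" for p
      proof -
        have "onorm (blinfun_apply (F p) - blinfun_apply (F x)) = dist (F p) (F x)"
          by (simp add: dist_norm norm_blinfun.rep_eq minus_blinfun.rep_eq fun_diff_def)
        then show ?thesis
          using d[of p] that by (simp add: dist_commute)
      qed
      show "x \<in> ball x d"
        using \<open>0 < d\<close> by simp
    qed
    then show ?thesis
      by (simp add: mult.commute)
  qed
  then show ?thesis
    using \<open>0 < d\<close> by blast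
qed

lemma difference_quotient_tendsto_derivative:
  fixes f :: "'a::real_normed_vector \<Rightarrow> 'b::real_normed_vector"
  assumes der: "\<And>p. (f has_derivative blinfun_apply (F p)) (at p)" and cont: "isCont F x"
    and y: "y \<longlonglongrightarrow> x" and z: "z \<longlonglongrightarrow> x" and distinct: "\<forall>\<^sub>F l in sequentially. y l \<noteq> z l"
    and direction: "(\<lambda>l. sgn (y l - z l)) \<longlonglongrightarrow> u"
  shows "(\<lambda>l. (f (y l) - f (z l)) /\<^sub>R norm (y l - z l)) \<longlonglongrightarrow> F x u"
proof -
  define r where "r l = (f (y l) - f (z l) - F x (y l - z l)) /\<^sub>R norm (y l - z l)" for l
  have "r \<longlonglongrightarrow> 0"
  proof (rule tendstoI)
    fix e :: real assume "0 < e"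
    then obtain d where "0 < d"
      and d: "\<And>p q. p \<in> ball x d \<Longrightarrow> q \<in> ball x d \<Longrightarrow>
        norm (f p - f q - F x (p - q)) \<le> e/2 * norm (p - q)"
      using continuous_derivative_strict_linearization[OF der cont, of "e/2"] by auto
    have "\<forall>\<^sub>F l in sequentially. y l \<in> ball x d \<and> z l \<in> ball x d"
      using y z \<open>0 < d\<close> unfolding tendsto_iff by (auto simp: dist_commute intro: eventually_conj)
    then show "\<forall>\<^sub>F l in sequentially. dist (r l) 0 < e"
      using distinct
    proof eventually_elim
      case (elim l)
      then have n: "0 < norm (y l - z l)"
        by simp
      have "norm (r l) = norm (f (y l) - f (z l) - F x (y l - z l)) / norm (y l - z l)"
        by (simp add: r_def divide_inverse mult.commute)
      also have "\<dots> \<le> e/2"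
        using d[of "y l" "z l"] elim n by (simp add: pos_divide_le_eq)
      finally have "norm (r l) \<le> e/2" .
      then show ?case
        using \<open>0 < e\<close> by simp
    qed
  qed
  from tendsto_add[OF blinfun.tendsto[OF tendsto_const direction] this]
  have "(\<lambda>l. F x (sgn (y l - z l)) + r l) \<longlonglongrightarrow> F x u"
    by simp
  moreover have "\<forall>\<^sub>F l in sequentially.
      F x (sgn (y l - z l)) + r l = (f (y l) - f (z l)) /\<^sub>R norm (y l - z l)"
    using distinct
    by eventually_elim (simp add: r_def sgn_div_norm blinfun.scaleR_right blinfun.diff_right algebra_simps)
  ultimately show ?thesis
    by (rule Lim_transform_eventually)
qed

lemma tendsto_at_right_INF_mono:
  fixes G :: "real \<Rightarrow> 'a::{complete_linorder, linorder_topology}"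
  assumes mono: "\<And>r s. a < r \<Longrightarrow> r \<le> s \<Longrightarrow> G r \<le> G s"
  shows "(G \<longlongrightarrow> (INF r\<in>{a<..}. G r)) (at_right a)"
proof (rule order_tendstoI)
  fix b assume "b < (INF r\<in>{a<..}. G r)"
  then have "b < G r" if "a < r" for r
    using that by (simp add: less_INF_D)
  then show "\<forall>\<^sub>F r in at_right a. b < G r"
    unfolding eventually_at_right_field by (intro exI[of _ "a + 1"]) auto
next
  fix b assume "(INF r\<in>{a<..}. G r) < b"
  then obtain r0 where r0: "a < r0" "G r0 < b"
    unfolding INF_less_iff by auto
  then have "G r < b" if "a < r" "r < r0" for r
    using mono[of r r0] that by auto
  then show "\<forall>\<^sub>F r in at_right a. G r < b"
    unfolding eventually_at_right_field using r0(1) by blast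
qed

lemma Lip_a_ge_difference_quotient_limit:
  assumes y: "\<And>l. y l \<in> HSG" "y \<longlonglongrightarrow> x" and z: "\<And>l. z l \<in> HSG" "z \<longlonglongrightarrow> x"
    and distinct: "\<forall>\<^sub>F l in sequentially. y l \<noteq> z l"
    and quotient: "(\<lambda>l. \<bar>h (y l) - h (z l)\<bar> / norm (y l - z l)) \<longlonglongrightarrow> c"
  shows "ereal c \<le> Lip_a h x"
proof -
  define G where "G r = (SUP (p, q) \<in> {(p, q). p \<noteq> q \<and> p \<in> HSG \<inter> ball x r \<and> q \<in> HSG \<inter> ball x r}.
      ereal (\<bar>h p - h q\<bar> / norm (p - q)))" for r
  have "(G \<longlongrightarrow> (INF r\<in>{0<..}. G r)) (at_right 0)"
    unfolding G_def by (rule tendsto_at_right_INF_mono, rule SUP_subset_mono) auto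
  then have Lip: "Lip_a h x = (INF r\<in>{0<..}. G r)"
    unfolding Lip_a_def G_def[abs_def] by (intro tendsto_Lim) simp_all
  have "ereal c \<le> G r" if "0 < r" for r
  proof (rule tendsto_upperbound[OF tendsto_ereal[OF quotient]])
    have "\<forall>\<^sub>F l in sequentially. y l \<in> ball x r \<and> z l \<in> ball x r"
      using y(2) z(2) that unfolding tendsto_iff by (auto simp: dist_commute intro: eventually_conj)
    then show "\<forall>\<^sub>F l in sequentially. ereal (\<bar>h (y l) - h (z l)\<bar> / norm (y l - z l)) \<le> G r"
      using distinct
    proof eventually_elim
      case (elim l)
      then show ?case
        unfolding G_def using y(1) z(1) by (intro SUP_upper2[of "(y l, z l)"]) auto
    qed
  qed simp
  then show ?thesis
    unfolding Lip by (intro INF_greatest) simp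
qed

lemma Lip_a_ge_abs_grad_inner:
  assumes "C1 f"
    and y: "\<And>l. y l \<in> HSG" "y \<longlonglongrightarrow> x" and z: "\<And>l. z l \<in> HSG" "z \<longlonglongrightarrow> x"
    and distinct: "\<forall>\<^sub>F l in sequentially. y l \<noteq> z l"
    and direction: "(\<lambda>l. sgn (y l - z l)) \<longlonglongrightarrow> u"
  shows "ereal \<bar>grad f x \<bullet> u\<bar> \<le> Lip_a f x"
proof -
  obtain F where der: "\<And>p. (f has_derivative blinfun_apply (F p)) (at p)"
    and "continuous_on UNIV F"
    using \<open>C1 f\<close> unfolding C1_def by blast
  then have "isCont F x"
    by (simp add: continuous_on_eq_continuous_at)
  from difference_quotient_tendsto_derivative[OF der this y(2) z(2) distinct direction]
  have "(\<lambda>l. (f (y l) - f (z l)) /\<^sub>R norm (y l - z l)) \<longlonglongrightarrow> F x u" .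
  from tendsto_rabs[OF this]
  have "(\<lambda>l. \<bar>f (y l) - f (z l)\<bar> / norm (y l - z l)) \<longlonglongrightarrow> \<bar>grad f x \<bullet> u\<bar>"
    by (simp add: has_derivative_eq_grad_inner[OF der] divide_inverse_commute abs_mult)
  then show ?thesis
    by (rule Lip_a_ge_difference_quotient_limit[OF y z distinct])
qed

theorem lemma4p5:
  fixes v :: "real^2 \<Rightarrow> real^2"
  assumes "kusuoka_field v"
  shows "\<forall>f. C1 f \<longrightarrow> (\<forall>x\<in>S_hat v. Lip_a f x \<ge> ereal (norm (projm (v x) *v grad f x)))"
proof (intro allI impI ballI)
  fix f x assume "C1 f" and "x \<in> S_hat v"
  then obtain w where x: "x = Phi w"
    and gram: "(\<lambda>l. normalized_gram (Dpsi_list (map w [0..<l]))) \<longlonglongrightarrow> projm (v x)"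
    unfolding S_hat_def S_tilde_def normalized_gram_def by blast
  have unit: "norm (v x) = 1"
    using assms Phi_in_HSG[of w] unfolding kusuoka_field_def x by blast
  obtain y z where "\<And>l. y l \<in> HSG" "y \<longlonglongrightarrow> x" "\<And>l. z l \<in> HSG" "z \<longlonglongrightarrow> x"
    and "\<forall>\<^sub>F l in sequentially. y l \<noteq> z l" and "(\<lambda>l. sgn (y l - z l)) \<longlonglongrightarrow> v x"
    using aligned_cell_vertex_pairs[OF unit gram, folded x] by blast
  then have "ereal \<bar>grad f x \<bullet> v x\<bar> \<le> Lip_a f x"
    by (rule Lip_a_ge_abs_grad_inner[OF \<open>C1 f\<close>])
  then show "ereal (norm (projm (v x) *v grad f x)) \<le> Lip_a f x"
    by (simp add: projm_mult unit inner_commute)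
qed

end
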